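(* Let $n\ge0$ be an integer or $n=\infty$ and let $\Gamma\xrightarrow{\varphi}K\xrightarrow{\varphi'}L$ be homomorphisms of discrete groups. If $\varphi$ and $\varphi'\circ\varphi$ are boundedly $n$-acyclic, then $\varphi'$ is boundedly $n$-acyclic.
   Context: An $\mathbb{R}$-generated Banach $K$-module is one of the form $\ell^\infty(S,\mathbb{R})$ for a $K$-set $S$, with $(k\cdot f)(s)=f(k^{-1}s)$. For a homomorphism $\psi\colon\Gamma\to K$, $\psi^{-1}V$ is $V$ with $\Gamma$ acting via $\psi$, and the restriction map $H^\bullet_b(\psi;V)\colon H^\bullet_b(K;V)\to H^\bullet_b(\Gamma;\psi^{-1}V)$ is induced by precomposition with $\psi$ on invariant bounded cochains of the standard resolution. $\psi$ is boundedly $n$-acyclic if $H^i_b(\psi;V)$ is an isomorphism for $i\le n$ and injective for $i=n+1$ for every $\mathbb{R}$-generated Banach $K$-module $V$. *)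

theory Defs
  imports "HOL-Algebra.Group_Action" "HOL-Library.Extended_Nat"
begin

text \<open>Bounded cohomology of a discrete group G with coefficients in the
R-generated Banach G-module l-infinity(S,R), for a G-set S given by an action
act (a homomorphism G to BijGroup S). It is computed by the standard
homogeneous resolution: an n-cochain is a map from (n+1)-tuples of group
elements (lists of length n+1) to l-infinity(S,R); we represent a cochain as
f :: 'g list => 's => real, only its values on tuples in the carrier and
points of S being relevant.\<close>

definition tuples :: "('g, 'x) monoid_scheme \<Rightarrow> nat \<Rightarrow> 'g list set" where
  "tuples G n = {gs. length gs = Suc n \<and> set gs \<subseteq> carrier G}"

text \<open>Bounded G-invariant n-cochains: uniformly bounded (sup norm) and
equivariant, f(k g_0,...,k g_n) = k . f(g_0,...,g_n), where (k.v)(s) = v(k^-1 s).\<close>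
definition bcochain ::
  "('g, 'x) monoid_scheme \<Rightarrow> 's set \<Rightarrow> ('g \<Rightarrow> 's \<Rightarrow> 's) \<Rightarrow> nat \<Rightarrow> ('g list \<Rightarrow> 's \<Rightarrow> real) \<Rightarrow> bool" where
  "bcochain G S act n f \<longleftrightarrow>
     (\<exists>C::real. \<forall>gs\<in>tuples G n. \<forall>s\<in>S. \<bar>f gs s\<bar> \<le> C) \<and>
     (\<forall>k\<in>carrier G. \<forall>gs\<in>tuples G n. \<forall>s\<in>S.
        f (map (\<lambda>g. k \<otimes>\<^bsub>G\<^esub> g) gs) s = f gs (act (inv\<^bsub>G\<^esub> k) s))"

definition cobdry :: "('g list \<Rightarrow> 's \<Rightarrow> real) \<Rightarrow> 'g list \<Rightarrow> 's \<Rightarrow> real" where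
  "cobdry f gs s = (\<Sum>i<length gs. (-1) ^ i * f (take i gs @ drop (Suc i) gs) s)"

definition bcocycle ::
  "('g, 'x) monoid_scheme \<Rightarrow> 's set \<Rightarrow> ('g \<Rightarrow> 's \<Rightarrow> 's) \<Rightarrow> nat \<Rightarrow> ('g list \<Rightarrow> 's \<Rightarrow> real) \<Rightarrow> bool" where
  "bcocycle G S act n f \<longleftrightarrow> bcochain G S act n f \<and>
     (\<forall>gs\<in>tuples G (Suc n). \<forall>s\<in>S. cobdry f gs s = 0)"

definition bcobdry ::
  "('g, 'x) monoid_scheme \<Rightarrow> 's set \<Rightarrow> ('g \<Rightarrow> 's \<Rightarrow> 's) \<Rightarrow> nat \<Rightarrow> ('g list \<Rightarrow> 's \<Rightarrow> real) \<Rightarrow> bool" where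
  "bcobdry G S act n f \<longleftrightarrow>
     (if n = 0 then (\<forall>gs\<in>tuples G 0. \<forall>s\<in>S. f gs s = 0)
      else (\<exists>b. bcochain G S act (n - 1) b \<and>
              (\<forall>gs\<in>tuples G n. \<forall>s\<in>S. f gs s = cobdry b gs s)))"

definition restr :: "('a \<Rightarrow> 'b) \<Rightarrow> ('b list \<Rightarrow> 's \<Rightarrow> real) \<Rightarrow> 'a list \<Rightarrow> 's \<Rightarrow> real" where
  "restr \<psi> f = (\<lambda>gs s. f (map \<psi> gs) s)"

text \<open>H^n_b(psi;V) : H^n_b(K;V) -> H^n_b(Gamma;psi^-1 V) injective, resp.
surjective, written out on representatives (the map is linear).\<close>
definition Hb_inj ::
  "('a, 'x) monoid_scheme \<Rightarrow> ('b, 'y) monoid_scheme \<Rightarrow> ('a \<Rightarrow> 'b) \<Rightarrow> 's set \<Rightarrow> ('b \<Rightarrow> 's \<Rightarrow> 's) \<Rightarrow> nat \<Rightarrow> bool" where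
  "Hb_inj \<Gamma> K \<psi> S act n \<longleftrightarrow>
     (\<forall>f. bcocycle K S act n f \<and> bcobdry \<Gamma> S (\<lambda>g. act (\<psi> g)) n (restr \<psi> f)
          \<longrightarrow> bcobdry K S act n f)"

definition Hb_surj ::
  "('a, 'x) monoid_scheme \<Rightarrow> ('b, 'y) monoid_scheme \<Rightarrow> ('a \<Rightarrow> 'b) \<Rightarrow> 's set \<Rightarrow> ('b \<Rightarrow> 's \<Rightarrow> 's) \<Rightarrow> nat \<Rightarrow> bool" where
  "Hb_surj \<Gamma> K \<psi> S act n \<longleftrightarrow>
     (\<forall>c. bcocycle \<Gamma> S (\<lambda>g. act (\<psi> g)) n c \<longrightarrow>
        (\<exists>f. bcocycle K S act n f \<and>
             bcobdry \<Gamma> S (\<lambda>g. act (\<psi> g)) n (\<lambda>gs s. c gs s - restr \<psi> f gs s)))"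

text \<open>psi is boundedly n-acyclic (n possibly infinite), tested against all
R-generated Banach K-modules l-infinity(S,R) with S a K-set whose points lie in
the type 's.\<close>
definition bdd_acyclic ::
  "'s itself \<Rightarrow> ('a, 'x) monoid_scheme \<Rightarrow> ('b, 'y) monoid_scheme \<Rightarrow> ('a \<Rightarrow> 'b) \<Rightarrow> enat \<Rightarrow> bool" where
  "bdd_acyclic _ \<Gamma> K \<psi> n \<longleftrightarrow>
     (\<forall>(S::'s set) act. group_action K S act \<longrightarrow>
        (\<forall>i::nat. (enat i \<le> n \<longrightarrow> Hb_inj \<Gamma> K \<psi> S act i \<and> Hb_surj \<Gamma> K \<psi> S act i) \<and>
                 (enat i = n \<longrightarrow> Hb_inj \<Gamma> K \<psi> S act (Suc i))))"

end

theory Submission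
  imports Defs
begin

text \<open>Restriction is functorial: restricting along \<open>\<phi>' \<circ> \<phi>\<close> is restricting along
\<open>\<phi>'\<close> and then along \<open>\<phi>\<close>. Injectivity of \<open>H\<^sub>b(\<phi>')\<close> therefore follows from that of
\<open>H\<^sub>b(\<phi>' \<circ> \<phi>)\<close>. For surjectivity, take a bounded \<open>K\<close>-cocycle \<open>c\<close>; surjectivity of
\<open>H\<^sub>b(\<phi>' \<circ> \<phi>)\<close> yields an \<open>L\<close>-cocycle \<open>f\<close> with \<open>\<phi>\<^sup>*c\<close> cohomologous to \<open>(\<phi>' \<circ> \<phi>)\<^sup>*f\<close>,
i.e. \<open>\<phi>\<^sup>*(c - \<phi>'\<^sup>*f)\<close> is a coboundary, and injectivity of \<open>H\<^sub>b(\<phi>)\<close> makes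
\<open>c - \<phi>'\<^sup>*f\<close> itself a coboundary.\<close>

lemma map_hom_tuples:
  assumes "\<psi> \<in> hom G H" "gs \<in> tuples G n"
  shows "map \<psi> gs \<in> tuples H n"
  using assms by (auto simp: tuples_def hom_def)

lemma restr_comp: "restr (\<phi>' \<circ> \<phi>) f = restr \<phi> (restr \<phi>' f)"
  by (simp add: restr_def fun_eq_iff)

lemma cobdry_restr: "cobdry (restr \<psi> f) gs s = cobdry f (map \<psi> gs) s"
  by (simp add: cobdry_def restr_def take_map drop_map)

lemma cobdry_diff: "cobdry (\<lambda>gs s. f gs s - g gs s) gs s = cobdry f gs s - cobdry g gs s"
  by (simp add: cobdry_def sum_subtractf right_diff_distrib)

lemma bcochain_restr:
  assumes "group G" "group H" and h: "\<psi> \<in> hom G H"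
    and b: "bcochain H S act n b"
  shows "bcochain G S (\<lambda>g. act (\<psi> g)) n (restr \<psi> b)"
proof -
  interpret group_hom G H \<psi>
    using assms by (simp add: group_hom_def group_hom_axioms_def)
  obtain C where C: "\<forall>gs\<in>tuples H n. \<forall>s\<in>S. \<bar>b gs s\<bar> \<le> C"
    using b by (auto simp: bcochain_def)
  have equivariant: "b (map (\<lambda>g. k' \<otimes>\<^bsub>H\<^esub> g) hs) s = b hs (act (inv\<^bsub>H\<^esub> k') s)"
    if "k' \<in> carrier H" "hs \<in> tuples H n" "s \<in> S" for k' hs s
    using b that by (auto simp: bcochain_def)
  have "restr \<psi> b (map (\<lambda>g. k \<otimes>\<^bsub>G\<^esub> g) gs) s = restr \<psi> b gs (act (\<psi> (inv\<^bsub>G\<^esub> k)) s)"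
    if k: "k \<in> carrier G" and gs: "gs \<in> tuples G n" and s: "s \<in> S" for k gs s
  proof -
    have "map \<psi> (map (\<lambda>g. k \<otimes>\<^bsub>G\<^esub> g) gs) = map (\<lambda>g. \<psi> k \<otimes>\<^bsub>H\<^esub> g) (map \<psi> gs)"
      using gs k by (auto simp: tuples_def)
    then show ?thesis
      using equivariant[OF _ map_hom_tuples[OF h gs] s] k
      by (simp add: restr_def del: map_map)
  qed
  moreover have "\<forall>gs\<in>tuples G n. \<forall>s\<in>S. \<bar>restr \<psi> b gs s\<bar> \<le> C"
    using C map_hom_tuples[OF h] by (auto simp: restr_def)
  ultimately show ?thesis
    unfolding bcochain_def by blast
qed

lemma bcocycle_restr:
  assumes "group G" "group H" and h: "\<psi> \<in> hom G H"
    and "bcocycle H S act n f"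
  shows "bcocycle G S (\<lambda>g. act (\<psi> g)) n (restr \<psi> f)"
  using assms bcochain_restr map_hom_tuples[OF h]
  by (auto simp: bcocycle_def cobdry_restr)

lemma bcobdry_restr:
  assumes "group G" "group H" and h: "\<psi> \<in> hom G H"
    and f: "bcobdry H S act n f"
  shows "bcobdry G S (\<lambda>g. act (\<psi> g)) n (restr \<psi> f)"
proof (cases "n = 0")
  case True
  then show ?thesis
    using f map_hom_tuples[OF h] by (auto simp: bcobdry_def restr_def)
next
  case False
  then obtain b where b: "bcochain H S act (n - 1) b"
    and f_eq: "\<forall>gs\<in>tuples H n. \<forall>s\<in>S. f gs s = cobdry b gs s"
    using f by (auto simp: bcobdry_def)
  have "\<forall>gs\<in>tuples G n. \<forall>s\<in>S. restr \<psi> f gs s = cobdry (restr \<psi> b) gs s"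
    using f_eq map_hom_tuples[OF h] by (simp add: cobdry_restr) (simp add: restr_def)
  then show ?thesis
    using False bcochain_restr[OF assms(1-3) b] unfolding bcobdry_def by auto
qed

lemma bcochain_diff:
  assumes "bcochain G S act n f" "bcochain G S act n g"
  shows "bcochain G S act n (\<lambda>gs s. f gs s - g gs s)"
proof -
  obtain C1 C2 where "\<forall>gs\<in>tuples G n. \<forall>s\<in>S. \<bar>f gs s\<bar> \<le> C1"
    and "\<forall>gs\<in>tuples G n. \<forall>s\<in>S. \<bar>g gs s\<bar> \<le> C2"
    using assms by (auto simp: bcochain_def)
  then have "\<forall>gs\<in>tuples G n. \<forall>s\<in>S. \<bar>f gs s - g gs s\<bar> \<le> C1 + C2"
    by (smt (verit, best))
  then show ?thesis
    using assms unfolding bcochain_def by auto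
qed

lemma bcocycle_diff:
  assumes "bcocycle G S act n f" "bcocycle G S act n g"
  shows "bcocycle G S act n (\<lambda>gs s. f gs s - g gs s)"
  using assms bcochain_diff by (auto simp: bcocycle_def cobdry_diff)

lemma group_action_hom_comp:
  assumes "group K" and h: "\<phi>' \<in> hom K L" and a: "group_action L S act"
  shows "group_action K S (\<lambda>k. act (\<phi>' k))"
proof -
  have "group_hom L (BijGroup S) act"
    using a by (simp add: group_action_def)
  then have "act \<in> hom L (BijGroup S)"
    by (simp add: group_hom_def group_hom_axioms_def)
  then have "(\<lambda>k. act (\<phi>' k)) \<in> hom K (BijGroup S)"
    using h by (auto simp: hom_def)
  then show ?thesis
    using assms(1) a
    by (simp add: group_action_def group_hom_def group_hom_axioms_def)
qed

lemma Hb_inj_of_comp: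
  assumes "group \<Gamma>" "group K" "\<phi> \<in> hom \<Gamma> K"
    and inj_comp: "Hb_inj \<Gamma> L (\<phi>' \<circ> \<phi>) S act n"
  shows "Hb_inj K L \<phi>' S act n"
  unfolding Hb_inj_def
proof (intro allI impI)
  fix f assume f: "bcocycle L S act n f \<and> bcobdry K S (\<lambda>k. act (\<phi>' k)) n (restr \<phi>' f)"
  then have "bcobdry \<Gamma> S (\<lambda>g. act ((\<phi>' \<circ> \<phi>) g)) n (restr (\<phi>' \<circ> \<phi>) f)"
    using bcobdry_restr[OF assms(1-3), of S "\<lambda>k. act (\<phi>' k)" n "restr \<phi>' f"]
    by (simp add: restr_comp)
  then show "bcobdry L S act n f"
    using inj_comp f unfolding Hb_inj_def by blast
qed

lemma Hb_surj_of_comp: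
  assumes "group \<Gamma>" "group K" "group L" "\<phi> \<in> hom \<Gamma> K" "\<phi>' \<in> hom K L"
    and surj_comp: "Hb_surj \<Gamma> L (\<phi>' \<circ> \<phi>) S act n"
    and inj: "Hb_inj \<Gamma> K \<phi> S (\<lambda>k. act (\<phi>' k)) n"
  shows "Hb_surj K L \<phi>' S act n"
  unfolding Hb_surj_def
proof (intro allI impI)
  fix c assume c: "bcocycle K S (\<lambda>k. act (\<phi>' k)) n c"
  then have "bcocycle \<Gamma> S (\<lambda>g. act ((\<phi>' \<circ> \<phi>) g)) n (restr \<phi> c)"
    using bcocycle_restr[OF assms(1,2,4)] by simp
  then obtain f where f: "bcocycle L S act n f"
    and "bcobdry \<Gamma> S (\<lambda>g. act ((\<phi>' \<circ> \<phi>) g)) n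
           (\<lambda>gs s. restr \<phi> c gs s - restr (\<phi>' \<circ> \<phi>) f gs s)"
    using surj_comp unfolding Hb_surj_def by blast
  moreover define d where "d = (\<lambda>gs s. c gs s - restr \<phi>' f gs s)"
  ultimately have "bcobdry \<Gamma> S (\<lambda>g. act (\<phi>' (\<phi> g))) n (restr \<phi> d)"
    by (simp add: d_def restr_def)
  moreover have "bcocycle K S (\<lambda>k. act (\<phi>' k)) n d"
    unfolding d_def using bcocycle_diff[OF c bcocycle_restr[OF assms(2,3,5) f]] .
  ultimately have "bcobdry K S (\<lambda>k. act (\<phi>' k)) n d"
    using inj unfolding Hb_inj_def by blast
  then show "\<exists>f. bcocycle L S act n f \<and>
      bcobdry K S (\<lambda>k. act (\<phi>' k)) n (\<lambda>gs s. c gs s - restr \<phi>' f gs s)"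
    using f unfolding d_def by blast
qed

theorem mainTheorem19:
  fixes \<Gamma> :: "'a monoid" and K :: "'b monoid" and L :: "'c monoid"
    and \<phi> :: "'a \<Rightarrow> 'b" and \<phi>' :: "'b \<Rightarrow> 'c" and n :: enat
  assumes "group \<Gamma>" and "group K" and "group L"
    and "\<phi> \<in> hom \<Gamma> K" and "\<phi>' \<in> hom K L"
    and "bdd_acyclic TYPE('s) \<Gamma> K \<phi> n"
    and "bdd_acyclic TYPE('s) \<Gamma> L (\<phi>' \<circ> \<phi>) n"
  shows "bdd_acyclic TYPE('s) K L \<phi>' n"
  unfolding bdd_acyclic_def
proof (intro allI impI)
  fix S :: "'s set" and act i
  assume act: "group_action L S act"
  then have "group_action K S (\<lambda>k. act (\<phi>' k))"
    using group_action_hom_comp assms(2,5) by blast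
  then have inj: "enat i \<le> n \<Longrightarrow> Hb_inj \<Gamma> K \<phi> S (\<lambda>k. act (\<phi>' k)) i"
    using assms(6) unfolding bdd_acyclic_def by blast
  have comp: "enat i \<le> n \<Longrightarrow> Hb_inj \<Gamma> L (\<phi>' \<circ> \<phi>) S act i \<and> Hb_surj \<Gamma> L (\<phi>' \<circ> \<phi>) S act i"
    and comp_next: "enat i = n \<Longrightarrow> Hb_inj \<Gamma> L (\<phi>' \<circ> \<phi>) S act (Suc i)"
    using assms(7) act unfolding bdd_acyclic_def by blast+
  show "(enat i \<le> n \<longrightarrow> Hb_inj K L \<phi>' S act i \<and> Hb_surj K L \<phi>' S act i) \<and>
        (enat i = n \<longrightarrow> Hb_inj K L \<phi>' S act (Suc i))"
    using Hb_inj_of_comp[OF assms(1,2,4)] Hb_surj_of_comp[OF assms(1-5)] inj comp comp_next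
    by blast
qed

end
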